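(* Let $G$ be an abelian Hausdorff topological group, $A\subseteq G\setminus\{0\}$, and let $K_A:S_A\to G$ be the associated Kalton map. (i) If $A$ is topologically independent in $G$, then $K_A$ is an open map onto $\langle A\rangle$ (i.e. $K_A:S_A\to\langle A\rangle$ is open, where $\langle A\rangle$ carries the subspace topology). (ii) If $K_A$ is a topologically isomorphic embedding, then $A$ is topologically independent in $G$.
   Context: For $a\in G$, $\langle a\rangle$ is the cyclic subgroup generated by $a$ with the subspace topology, and $\langle A\rangle$ is the subgroup generated by $A$. $S_A=\bigoplus_{a\in A}\langle a\rangle$ is the subgroup of finitely supported elements of $\prod_{a\in A}\langle a\rangle$, with the subspace topology of the Tychonoff product topology. The Kalton map $K_A:S_A\to G$ is the unique homomorphism extending each inclusion $\langle a\rangle\to G$. $A$ is topologically independent if $0\notin A$ and for every neighbourhood $W$ of $0$ there is a neighbourhood $U$ of $0$ such that for every finite $F\subseteq A$ and all integers $\{z_a:a\in F\}$, $\sum_{a\in F}z_aa\in U$ implies $z_aa\in W$ for all $a\in F$. *)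

theory Defs
  imports "HOL-Analysis.Analysis"
begin

definition nmult :: "nat \<Rightarrow> 'a::ab_group_add \<Rightarrow> 'a" where
  "nmult n a = (\<Sum>i<n. a)"

definition zmult :: "int \<Rightarrow> 'a::ab_group_add \<Rightarrow> 'a" where
  "zmult k a = (if 0 \<le> k then nmult (nat k) a else - nmult (nat (- k)) a)"

definition is_subgroup :: "'a::ab_group_add set \<Rightarrow> bool" where
  "is_subgroup H \<longleftrightarrow> 0 \<in> H \<and> (\<forall>x\<in>H. \<forall>y\<in>H. x - y \<in> H)"

definition gen_subgroup :: "'a::ab_group_add set \<Rightarrow> 'a set" where
  "gen_subgroup A = is_subgroup hull A"

definition cyclic_subgroup :: "'a::ab_group_add \<Rightarrow> 'a set" where
  "cyclic_subgroup a = gen_subgroup {a}"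

definition nhd0 :: "'a::{zero,topological_space} set \<Rightarrow> bool" where
  "nhd0 W \<longleftrightarrow> (\<exists>V. open V \<and> 0 \<in> V \<and> V \<subseteq> W)"

definition SA_carrier :: "'a::{ab_group_add,topological_space} set \<Rightarrow> ('a \<Rightarrow> 'a) set" where
  "SA_carrier A = {f \<in> (\<Pi>\<^sub>E a\<in>A. cyclic_subgroup a). finite {a \<in> A. f a \<noteq> 0}}"

definition SA_top :: "'a::{ab_group_add,topological_space} set \<Rightarrow> ('a \<Rightarrow> 'a) topology" where
  "SA_top A = subtopology (product_topology (\<lambda>a. subtopology euclidean (cyclic_subgroup a)) A)
                          (SA_carrier A)"

definition kalton :: "'a::ab_group_add set \<Rightarrow> ('a \<Rightarrow> 'a) \<Rightarrow> 'a" where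
  "kalton A f = (\<Sum>a\<in>{a \<in> A. f a \<noteq> 0}. f a)"

definition top_independent :: "'a::{ab_group_add,topological_space} set \<Rightarrow> bool" where
  "top_independent A \<longleftrightarrow> 0 \<notin> A \<and>
     (\<forall>W. nhd0 W \<longrightarrow> (\<exists>U. nhd0 U \<and>
        (\<forall>F z. finite F \<and> F \<subseteq> A \<longrightarrow>
           (\<Sum>a\<in>F. zmult (z a) a) \<in> U \<longrightarrow> (\<forall>a\<in>F. zmult (z a) a \<in> W))))"

end

theory Submission
  imports Defs
begin

text \<open>Every element of \<open>S\<^sub>A\<close> is a finitely supported tuple of multiples \<open>z\<^sub>a a\<close>, so
  topological independence says precisely that a small value \<open>K\<^sub>A g\<close> forces every coordinate
  \<open>g a\<close> to be small. As the topology of \<open>S\<^sub>A\<close> is coordinatewise and a basic neighbourhood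
  constrains only finitely many coordinates, this makes the image of a neighbourhood of \<open>f\<close> a
  neighbourhood of \<open>K\<^sub>A f\<close> in \<open>\<langle>A\<rangle>\<close>. Conversely, if \<open>K\<^sub>A\<close> is an embedding, the image of a small
  box \<open>B\<close> around \<open>0\<close> is the trace on \<open>\<langle>A\<rangle>\<close> of an open set \<open>U\<close>; by injectivity every \<open>g\<close> with
  \<open>K\<^sub>A g \<in> U\<close> lies in \<open>B\<close>, and so does each of its one-coordinate truncations, whose
  \<open>K\<^sub>A\<close>-values are the single summands \<open>g a\<close>.\<close>

subsection \<open>Integer multiples and subgroups\<close>

lemma nmult_Suc: "nmult (Suc n) a = nmult n a + a"
  by (simp add: nmult_def)

lemma zmult_0 [simp]: "zmult 0 a = 0"
  by (simp add: zmult_def nmult_def)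

lemma zmult_add1: "zmult (k + 1) a = zmult k a + a"
proof (cases "k \<ge> 0")
  case True
  then have "nat (k + 1) = Suc (nat k)" by simp
  with True show ?thesis by (simp add: zmult_def nmult_Suc)
next
  case False
  show ?thesis
  proof (cases "k = -1")
    case True then show ?thesis by (simp add: zmult_def nmult_def)
  next
    case k_neq: False
    with False have "nat (- k) = Suc (nat (- (k + 1)))" by simp
    with False k_neq show ?thesis by (simp add: zmult_def nmult_Suc)
  qed
qed

lemma zmult_1 [simp]: "zmult 1 a = a"
  using zmult_add1[of 0 a] by simp

lemma zmult_diff1: "zmult (k - 1) a = zmult k a - a"
  using zmult_add1[of "k - 1" a] by (simp add: algebra_simps)

lemma zmult_add: "zmult (k + l) a = zmult k a + zmult l a"
proof (induction l rule: int_induct[where k = 0])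
  case base then show ?case by simp
next
  case (step1 i)
  have "zmult (k + (i + 1)) a = zmult (k + i) a + a"
    using zmult_add1[of "k + i" a] by (simp add: algebra_simps)
  then show ?case by (simp add: step1 zmult_add1 add.assoc)
next
  case (step2 i)
  have "zmult (k + (i - 1)) a = zmult (k + i) a - a"
    using zmult_diff1[of "k + i" a] by (simp add: algebra_simps)
  then show ?case by (simp add: step2 zmult_diff1 add_diff_eq)
qed

lemma zmult_diff: "zmult (k - l) a = zmult k a - zmult l a"
  using zmult_add[of "k - l" l a] by (simp add: algebra_simps)

lemma is_subgroup_hull: "is_subgroup (is_subgroup hull S)"
  by (rule hull_in) (auto simp: is_subgroup_def)

lemma is_subgroup_add: "is_subgroup H \<Longrightarrow> x \<in> H \<Longrightarrow> y \<in> H \<Longrightarrow> x + y \<in> H"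
  unfolding is_subgroup_def by (metis diff_0 diff_minus_eq_add)

lemma is_subgroup_sum: "is_subgroup H \<Longrightarrow> (\<And>x. x \<in> F \<Longrightarrow> f x \<in> H) \<Longrightarrow> sum f F \<in> H"
  by (induction F rule: infinite_finite_induct) (auto simp: is_subgroup_def is_subgroup_add)

lemma is_subgroup_zmult: "is_subgroup H \<Longrightarrow> a \<in> H \<Longrightarrow> zmult k a \<in> H"
proof (induction k rule: int_induct[where k = 0])
  case base then show ?case by (simp add: is_subgroup_def)
next
  case (step1 i) then show ?case by (simp add: zmult_add1 is_subgroup_add)
next
  case (step2 i) then show ?case by (simp add: zmult_diff1 is_subgroup_def)
qed

lemma is_subgroup_range_zmult: "is_subgroup (range (\<lambda>k. zmult k a))"
  unfolding is_subgroup_def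
proof (intro conjI ballI)
  show "0 \<in> range (\<lambda>k. zmult k a)" by (rule range_eqI[of _ _ 0]) simp
  fix x y assume "x \<in> range (\<lambda>k. zmult k a)" "y \<in> range (\<lambda>k. zmult k a)"
  then show "x - y \<in> range (\<lambda>k. zmult k a)" by (auto simp flip: zmult_diff)
qed

lemma cyclic_subgroup_eq: "cyclic_subgroup a = range (\<lambda>k. zmult k a)"
proof
  show "cyclic_subgroup a \<subseteq> range (\<lambda>k. zmult k a)"
    unfolding cyclic_subgroup_def gen_subgroup_def
    by (rule hull_minimal) (auto simp: is_subgroup_range_zmult intro: range_eqI[of _ _ 1])
  have "a \<in> cyclic_subgroup a"
    unfolding cyclic_subgroup_def gen_subgroup_def by (rule hull_inc) simp
  then show "range (\<lambda>k. zmult k a) \<subseteq> cyclic_subgroup a"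
    using is_subgroup_zmult[OF is_subgroup_hull]
    unfolding cyclic_subgroup_def gen_subgroup_def by blast
qed

lemma zero_in_cyclic_subgroup: "0 \<in> cyclic_subgroup a"
  unfolding cyclic_subgroup_eq by (rule range_eqI[of _ _ 0]) simp

lemma cyclic_subgroup_subset_gen_subgroup: "a \<in> A \<Longrightarrow> cyclic_subgroup a \<subseteq> gen_subgroup A"
  unfolding cyclic_subgroup_def gen_subgroup_def by (rule hull_mono) simp

subsection \<open>The group \<open>S\<^sub>A\<close> and the Kalton map\<close>

lemma topspace_SA_top: "topspace (SA_top A) = SA_carrier A"
  unfolding SA_top_def by (auto simp: topspace_product_topology SA_carrier_def)

lemma kalton_eq_sum:
  "finite F \<Longrightarrow> F \<subseteq> A \<Longrightarrow> {a \<in> A. f a \<noteq> 0} \<subseteq> F \<Longrightarrow> kalton A f = sum f F"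
  unfolding kalton_def by (rule sum.mono_neutral_left) auto

lemma SA_carrier_diff:
  assumes f: "f \<in> SA_carrier A" and g: "g \<in> SA_carrier A"
  shows "restrict (\<lambda>a. f a - g a) A \<in> SA_carrier A"
    and "kalton A (restrict (\<lambda>a. f a - g a) A) = kalton A f - kalton A g"
proof -
  let ?F = "{a \<in> A. f a \<noteq> 0} \<union> {a \<in> A. g a \<noteq> 0}"
  have fin: "finite ?F" using f g by (auto simp: SA_carrier_def)
  have "f a - g a \<in> cyclic_subgroup a" if "a \<in> A" for a
    using f g that is_subgroup_hull[of "{a}"]
    unfolding SA_carrier_def cyclic_subgroup_def gen_subgroup_def is_subgroup_def
    by (auto simp: PiE_iff)
  then show "restrict (\<lambda>a. f a - g a) A \<in> SA_carrier A"
    unfolding SA_carrier_def by (auto intro: finite_subset[OF _ fin])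
  have "kalton A (restrict (\<lambda>a. f a - g a) A) = sum (restrict (\<lambda>a. f a - g a) A) ?F"
    by (rule kalton_eq_sum[OF fin]) auto
  also have "\<dots> = sum (\<lambda>a. f a - g a) ?F" by (rule sum.cong) auto
  also have "\<dots> = sum f ?F - sum g ?F" by (rule sum_subtractf)
  also have "\<dots> = kalton A f - kalton A g"
    by (simp add: kalton_eq_sum[OF fin])
  finally show "kalton A (restrict (\<lambda>a. f a - g a) A) = kalton A f - kalton A g" .
qed

lemma SA_carrier_coeffs:
  assumes "g \<in> SA_carrier A"
  obtains z where "\<And>a. a \<in> A \<Longrightarrow> g a = zmult (z a) a"
proof -
  have "\<forall>a\<in>A. \<exists>k. g a = zmult k a"
    using assms by (auto simp: SA_carrier_def PiE_iff cyclic_subgroup_eq)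
  then have "\<exists>z. \<forall>a\<in>A. g a = zmult (z a) a" by (rule bchoice)
  with that show thesis by blast
qed

lemma SA_carrier_of_coeffs:
  fixes z :: "'a::{ab_group_add,topological_space} \<Rightarrow> int"
  assumes "finite F" "F \<subseteq> A"
  defines "g \<equiv> restrict (\<lambda>a. if a \<in> F then zmult (z a) a else 0) A"
  shows "g \<in> SA_carrier A" and "kalton A g = (\<Sum>a\<in>F. zmult (z a) a)"
proof -
  have "{a \<in> A. g a \<noteq> 0} \<subseteq> F" by (auto simp: g_def)
  then show "g \<in> SA_carrier A"
    using assms(1) finite_subset zero_in_cyclic_subgroup
    by (fastforce simp: SA_carrier_def g_def PiE_iff cyclic_subgroup_eq)
  have "kalton A g = sum g F"
    using assms(1,2) by (intro kalton_eq_sum) (auto simp: g_def)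
  also have "\<dots> = (\<Sum>a\<in>F. zmult (z a) a)"
    using assms(2) by (intro sum.cong) (auto simp: g_def)
  finally show "kalton A g = (\<Sum>a\<in>F. zmult (z a) a)" .
qed

lemma SA_carrier_single:
  assumes "a \<in> A" "x \<in> cyclic_subgroup a"
  shows "restrict (\<lambda>c. if c = a then x else 0) A \<in> SA_carrier A"
    and "kalton A (restrict (\<lambda>c. if c = a then x else 0) A) = x"
proof -
  obtain k where k: "x = zmult k a" using assms(2) by (auto simp: cyclic_subgroup_eq)
  have "restrict (\<lambda>c. if c = a then x else 0) A =
        restrict (\<lambda>c. if c \<in> {a} then zmult k c else 0) A"
    using k by (intro restrict_ext) auto
  then show "restrict (\<lambda>c. if c = a then x else 0) A \<in> SA_carrier A"
    and "kalton A (restrict (\<lambda>c. if c = a then x else 0) A) = x"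
    using SA_carrier_of_coeffs[of "{a}" A "\<lambda>_. k"] assms(1) k by simp_all
qed

lemma SA_carrier_zero: "restrict (\<lambda>c. 0) A \<in> SA_carrier A" "kalton A (restrict (\<lambda>c. 0) A) = 0"
  using SA_carrier_of_coeffs[of "{}" A] by auto

lemma kalton_image: "kalton A ` SA_carrier A = gen_subgroup A"
proof
  have "kalton A h \<in> gen_subgroup A" if "h \<in> SA_carrier A" for h
    unfolding kalton_def gen_subgroup_def
    using that cyclic_subgroup_subset_gen_subgroup
    by (intro is_subgroup_sum[OF is_subgroup_hull])
       (auto simp: SA_carrier_def PiE_iff gen_subgroup_def)
  then show "kalton A ` SA_carrier A \<subseteq> gen_subgroup A" by blast
  show "gen_subgroup A \<subseteq> kalton A ` SA_carrier A"
    unfolding gen_subgroup_def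
  proof (rule hull_minimal)
    show "A \<subseteq> kalton A ` SA_carrier A"
    proof
      fix a assume a: "a \<in> A"
      have "a \<in> cyclic_subgroup a" unfolding cyclic_subgroup_eq by (rule range_eqI[of _ _ 1]) simp
      from SA_carrier_single[OF a this] show "a \<in> kalton A ` SA_carrier A"
        by (metis image_eqI)
    qed
    show "is_subgroup (kalton A ` SA_carrier A)"
      unfolding is_subgroup_def
    proof (intro conjI ballI)
      show "0 \<in> kalton A ` SA_carrier A" using SA_carrier_zero[of A] by (metis image_eqI)
      fix x y assume "x \<in> kalton A ` SA_carrier A" "y \<in> kalton A ` SA_carrier A"
      then obtain f g where "f \<in> SA_carrier A" "g \<in> SA_carrier A" "x = kalton A f" "y = kalton A g"
        by auto
      from SA_carrier_diff[OF this(1,2)] this(3,4)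
      show "x - y \<in> kalton A ` SA_carrier A" by (metis image_eqI)
    qed
  qed
qed

subsection \<open>Topological independence in terms of \<open>S\<^sub>A\<close>\<close>

lemma nhd0_zero: "nhd0 W \<Longrightarrow> 0 \<in> W"
  unfolding nhd0_def by blast

lemma coeff_condition_iff_SA:
  assumes "0 \<in> W"
  shows "(\<forall>F z. finite F \<and> F \<subseteq> A \<longrightarrow>
            (\<Sum>a\<in>F. zmult (z a) a) \<in> U \<longrightarrow> (\<forall>a\<in>F. zmult (z a) a \<in> W))
     \<longleftrightarrow> (\<forall>g\<in>SA_carrier A. kalton A g \<in> U \<longrightarrow> (\<forall>a\<in>A. g a \<in> W))"
proof safe
  fix g a
  assume coeff: "\<forall>F z. finite F \<and> F \<subseteq> A \<longrightarrow>
            (\<Sum>a\<in>F. zmult (z a) a) \<in> U \<longrightarrow> (\<forall>a\<in>F. zmult (z a) a \<in> W)"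
    and g: "g \<in> SA_carrier A" "kalton A g \<in> U" and a: "a \<in> A"
  obtain z where z: "\<And>a. a \<in> A \<Longrightarrow> g a = zmult (z a) a" using SA_carrier_coeffs[OF g(1)] by blast
  define F where "F = {a \<in> A. g a \<noteq> 0}"
  have F: "finite F" "F \<subseteq> A" using g(1) by (auto simp: F_def SA_carrier_def)
  have "(\<Sum>a\<in>F. zmult (z a) a) = kalton A g"
    unfolding kalton_def F_def[symmetric] using F(2) z by (intro sum.cong) auto
  with g(2) have "(\<Sum>a\<in>F. zmult (z a) a) \<in> U" by simp
  note small = coeff[rule_format, OF conjI[OF F] this]
  show "g a \<in> W"
  proof (cases "a \<in> F")
    case True then show ?thesis using small[OF True] by (simp add: z[OF a])
  next
    case False then show ?thesis using a assms by (simp add: F_def)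
  qed
next
  fix F z a
  assume SA: "\<forall>g\<in>SA_carrier A. kalton A g \<in> U \<longrightarrow> (\<forall>a\<in>A. g a \<in> W)"
    and F: "finite F" "F \<subseteq> A" and sum: "(\<Sum>a\<in>F. zmult (z a) a) \<in> U" and a: "a \<in> F"
  define g where "g = restrict (\<lambda>a. if a \<in> F then zmult (z a) a else 0) A"
  have "g \<in> SA_carrier A" "kalton A g \<in> U"
    using SA_carrier_of_coeffs[OF F, of z] sum unfolding g_def by simp_all
  then have "g a \<in> W" using SA a F(2) by blast
  with a F(2) show "zmult (z a) a \<in> W" by (auto simp: g_def)
qed

lemma top_independent_iff_SA:
  "top_independent A \<longleftrightarrow> 0 \<notin> A \<and>
     (\<forall>W. nhd0 W \<longrightarrow>
        (\<exists>U. nhd0 U \<and> (\<forall>g\<in>SA_carrier A. kalton A g \<in> U \<longrightarrow> (\<forall>a\<in>A. g a \<in> W))))"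
proof -
  have "(\<exists>U. nhd0 U \<and> (\<forall>F z. finite F \<and> F \<subseteq> A \<longrightarrow>
            (\<Sum>a\<in>F. zmult (z a) a) \<in> U \<longrightarrow> (\<forall>a\<in>F. zmult (z a) a \<in> W)))
     \<longleftrightarrow> (\<exists>U. nhd0 U \<and> (\<forall>g\<in>SA_carrier A. kalton A g \<in> U \<longrightarrow> (\<forall>a\<in>A. g a \<in> W)))"
    if "nhd0 W" for W
    unfolding coeff_condition_iff_SA[OF nhd0_zero[OF that]] ..
  then show ?thesis unfolding top_independent_def by (simp only: cong: imp_cong)
qed

subsection \<open>Boxes in \<open>S\<^sub>A\<close>\<close>

lemma SA_top_open_contains_box:
  assumes N: "openin (SA_top A) N" and "f \<in> N"
  obtains P where "\<And>a. a \<in> A \<Longrightarrow> open (P a) \<and> f a \<in> P a" "finite {a \<in> A. P a \<noteq> UNIV}"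
    "\<And>g. g \<in> SA_carrier A \<Longrightarrow> (\<forall>a\<in>A. g a \<in> P a) \<Longrightarrow> g \<in> N"
proof -
  let ?X = "\<lambda>a. subtopology euclidean (cyclic_subgroup a)"
  obtain T where T: "openin (product_topology ?X A) T" "N = T \<inter> SA_carrier A"
    using N unfolding SA_top_def openin_subtopology by auto
  with \<open>f \<in> N\<close> obtain U where U: "finite {a \<in> A. U a \<noteq> topspace (?X a)}"
      "\<forall>a\<in>A. openin (?X a) (U a)" "f \<in> Pi\<^sub>E A U" "Pi\<^sub>E A U \<subseteq> T"
    unfolding openin_product_topology_alt by blast
  have "\<exists>Q. open Q \<and> U a = cyclic_subgroup a \<inter> Q" if "a \<in> A" for a
    using U(2) that unfolding openin_subtopology by (auto simp: Int_commute)
  then obtain Q where Q: "\<And>a. a \<in> A \<Longrightarrow> open (Q a) \<and> U a = cyclic_subgroup a \<inter> Q a"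
    by metis
  \<comment> \<open>Unconstrained coordinates get the box side \<open>UNIV\<close>, so the box is finitely constrained.\<close>
  define P where "P a = (if U a = cyclic_subgroup a then UNIV else Q a)" for a
  have P: "open (P a) \<and> U a = cyclic_subgroup a \<inter> P a" if "a \<in> A" for a
    using Q[OF that] by (auto simp: P_def)
  show thesis
  proof
    show "open (P a) \<and> f a \<in> P a" if "a \<in> A" for a using P[OF that] U(3) that by auto
    show "finite {a \<in> A. P a \<noteq> UNIV}"
      by (rule finite_subset[OF _ U(1)]) (auto simp: P_def)
    show "g \<in> N" if "g \<in> SA_carrier A" "\<forall>a\<in>A. g a \<in> P a" for g
    proof -
      have "g \<in> Pi\<^sub>E A U" using that P by (auto simp: SA_carrier_def PiE_def)
      then show ?thesis using U(4) T(2) that(1) by auto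
    qed
  qed
qed

lemma openin_SA_top_box:
  assumes "\<And>a. a \<in> A \<Longrightarrow> open (P a)" "finite {a \<in> A. P a \<noteq> UNIV}"
  shows "openin (SA_top A) {g \<in> SA_carrier A. \<forall>a\<in>A. g a \<in> P a}"
proof -
  let ?X = "\<lambda>a. subtopology euclidean (cyclic_subgroup a)"
  have "openin (product_topology ?X A) (\<Pi>\<^sub>E a\<in>A. cyclic_subgroup a \<inter> P a)"
    unfolding openin_PiE_gen
    using assms by (auto intro: finite_subset[OF _ assms(2)] openin_open_Int)
  moreover have "{g \<in> SA_carrier A. \<forall>a\<in>A. g a \<in> P a} =
                 (\<Pi>\<^sub>E a\<in>A. cyclic_subgroup a \<inter> P a) \<inter> SA_carrier A"
    by (auto simp: SA_carrier_def PiE_iff extensional_def)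
  ultimately show ?thesis unfolding SA_top_def openin_subtopology by blast
qed

lemma nhd0_translated_box:
  fixes f :: "'a::topological_ab_group_add \<Rightarrow> 'a"
  assumes "\<And>a. a \<in> A \<Longrightarrow> open (P a) \<and> f a \<in> P a" "finite {a \<in> A. P a \<noteq> UNIV}"
  shows "nhd0 {y. \<forall>a\<in>A. y + f a \<in> P a}"
proof -
  have "{y. \<forall>a\<in>A. y + f a \<in> P a} = (\<Inter>a\<in>{a \<in> A. P a \<noteq> UNIV}. (\<lambda>y. y + f a) -` P a)"
    by auto
  moreover have "open ((\<lambda>y. y + f a) -` P a)" if "a \<in> A" for a
    by (rule open_vimage) (use assms(1) that in \<open>auto intro!: continuous_intros\<close>)
  ultimately have "open {y. \<forall>a\<in>A. y + f a \<in> P a}" using assms(2) by (auto intro!: open_INT)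
  then show ?thesis using assms(1) unfolding nhd0_def by auto
qed

lemma kalton_image_nhd_if_top_independent:
  fixes A :: "'a::topological_ab_group_add set"
  assumes "top_independent A" and N: "openin (SA_top A) N" and f: "f \<in> N"
  shows "\<exists>T. openin (top_of_set (gen_subgroup A)) T \<and> kalton A f \<in> T \<and> T \<subseteq> kalton A ` N"
proof -
  have fS: "f \<in> SA_carrier A" using f openin_subset[OF N] by (auto simp: topspace_SA_top)
  obtain P where P: "\<And>a. a \<in> A \<Longrightarrow> open (P a) \<and> f a \<in> P a" "finite {a \<in> A. P a \<noteq> UNIV}"
    "\<And>g. g \<in> SA_carrier A \<Longrightarrow> (\<forall>a\<in>A. g a \<in> P a) \<Longrightarrow> g \<in> N"
    using SA_top_open_contains_box[OF N f] by blast
  have "nhd0 {y. \<forall>a\<in>A. y + f a \<in> P a}" using P(1,2) by (rule nhd0_translated_box)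
  from assms(1)[unfolded top_independent_iff_SA, THEN conjunct2, rule_format, OF this]
  obtain U where U: "nhd0 U"
    "\<forall>g\<in>SA_carrier A. kalton A g \<in> U \<longrightarrow> (\<forall>a\<in>A. g a + f a \<in> P a)"
    by auto
  obtain V where V: "open V" "0 \<in> V" "V \<subseteq> U" using U(1) unfolding nhd0_def by blast
  define T where "T = gen_subgroup A \<inter> (\<lambda>y. y - kalton A f) -` V"
  have "T \<subseteq> kalton A ` N"
  proof
    fix y assume "y \<in> T"
    then obtain h where h: "h \<in> SA_carrier A" "y = kalton A h" "kalton A h - kalton A f \<in> V"
      by (auto simp: T_def simp flip: kalton_image)
    let ?g = "restrict (\<lambda>a. h a - f a) A"
    have "?g \<in> SA_carrier A" "kalton A ?g \<in> U"
      using SA_carrier_diff[OF h(1) fS] h(3) V(3) by auto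
    with U(2) have "\<forall>a\<in>A. ?g a + f a \<in> P a" by blast
    then have "h \<in> N" using P(3)[OF h(1)] by simp
    then show "y \<in> kalton A ` N" using h(2) by blast
  qed
  moreover have "openin (top_of_set (gen_subgroup A)) T"
    unfolding T_def
    by (rule openin_open_Int, rule open_vimage) (use V in \<open>auto intro!: continuous_intros\<close>)
  moreover have "kalton A f \<in> T"
    using fS V(2) by (auto simp: T_def simp flip: kalton_image)
  ultimately show ?thesis by blast
qed

lemma kalton_open_map_if_top_independent:
  fixes A :: "'a::topological_ab_group_add set"
  assumes "top_independent A"
  shows "open_map (SA_top A) (top_of_set (gen_subgroup A)) (kalton A)"
  unfolding open_map_def
proof (intro allI impI)
  fix N assume N: "openin (SA_top A) N"
  show "openin (top_of_set (gen_subgroup A)) (kalton A ` N)"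
    unfolding openin_subopen[of _ "kalton A ` N"]
    using kalton_image_nhd_if_top_independent[OF assms N] by blast
qed

lemma top_independent_if_kalton_embedding:
  assumes "0 \<notin> A" and emb: "embedding_map (SA_top A) euclidean (kalton A)"
  shows "top_independent A"
  unfolding top_independent_iff_SA
proof (intro conjI allI impI)
  let ?K = "kalton A" and ?S = "SA_carrier A" and ?zero = "restrict (\<lambda>c. 0) A"
  have hom: "homeomorphic_map (SA_top A) (top_of_set (?K ` ?S)) ?K"
    using emb unfolding embedding_map_def topspace_SA_top .
  have inj: "inj_on ?K ?S"
    using homeomorphic_imp_injective_map[OF hom] by (simp add: topspace_SA_top)
  have cont: "continuous_map (SA_top A) euclidean ?K"
    using homeomorphic_imp_continuous_map[OF hom] continuous_map_in_subtopology by blast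
  fix W :: "'a set" assume "nhd0 W"
  then obtain V where V: "open V" "0 \<in> V" "V \<subseteq> W" unfolding nhd0_def by blast
  have open_preimage: "openin (SA_top A) {g \<in> ?S. ?K g \<in> V}"
    using openin_continuous_map_preimage[OF cont, of V] V(1) by (simp add: topspace_SA_top)
  have "?zero \<in> {g \<in> ?S. ?K g \<in> V}" using SA_carrier_zero[of A] V(2) by simp
  from SA_top_open_contains_box[OF open_preimage this] obtain P where P: "\<And>a. a \<in> A \<Longrightarrow> open (P a) \<and> ?zero a \<in> P a"
    "finite {a \<in> A. P a \<noteq> UNIV}" "\<And>g. g \<in> ?S \<Longrightarrow> \<forall>a\<in>A. g a \<in> P a \<Longrightarrow> g \<in> {g \<in> ?S. ?K g \<in> V}"
    by blast
  have P0: "0 \<in> P a" if "a \<in> A" for a using P(1)[OF that] that by simp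
  define B where "B = {g \<in> ?S. \<forall>a\<in>A. g a \<in> P a}"
  have "openin (SA_top A) B" unfolding B_def using P(1,2) by (intro openin_SA_top_box) auto
  then have "openin (top_of_set (?K ` ?S)) (?K ` B)"
    using homeomorphic_imp_open_map[OF hom] unfolding open_map_def by blast
  then obtain U where U: "open U" "?K ` B = ?K ` ?S \<inter> U"
    unfolding openin_open by blast
  show "\<exists>U. nhd0 U \<and> (\<forall>g\<in>?S. ?K g \<in> U \<longrightarrow> (\<forall>a\<in>A. g a \<in> W))"
  proof (intro exI conjI ballI impI)
    have "?zero \<in> B" using SA_carrier_zero(1)[of A] P0 by (simp add: B_def)
    then have "?K ?zero \<in> U" using U(2) by blast
    then have "0 \<in> U" using SA_carrier_zero(2)[of A] by simp
    then show "nhd0 U" using U(1) unfolding nhd0_def by blast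
    fix g a assume g: "g \<in> ?S" "?K g \<in> U" and a: "a \<in> A"
    have "?K g \<in> ?K ` B" using g U(2) by blast
    then obtain h where "h \<in> B" "?K g = ?K h" by auto
    then have "g \<in> B" using inj_onD[OF inj _ g(1)] by (simp add: B_def)
    define d where "d = restrict (\<lambda>c. if c = a then g a else 0) A"
    have ga: "g a \<in> cyclic_subgroup a" using g(1) a by (auto simp: SA_carrier_def PiE_iff)
    have d: "d \<in> ?S" "?K d = g a" using SA_carrier_single[OF a ga] by (simp_all add: d_def)
    moreover have "\<forall>c\<in>A. d c \<in> P c" using \<open>g \<in> B\<close> P0 by (simp add: d_def B_def)
    ultimately have "g a \<in> V" using P(3)[OF d(1)] by simp
    with V(3) show "g a \<in> W" by blast
  qed
qed (fact assms(1))

theorem proposition4p7: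
  fixes A :: "'a::{topological_ab_group_add, t2_space} set"
  assumes "0 \<notin> A"
  shows "(top_independent A \<longrightarrow>
            kalton A ` SA_carrier A = gen_subgroup A \<and>
            open_map (SA_top A) (subtopology euclidean (gen_subgroup A)) (kalton A))
       \<and> (embedding_map (SA_top A) euclidean (kalton A) \<longrightarrow> top_independent A)"
  using kalton_image kalton_open_map_if_top_independent
    top_independent_if_kalton_embedding[OF assms] by blast

end
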